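(* Let $Q,\mathcal{R},\tilde R\in\mathbb{Z}^+$ and $a_1,\dots,a_{\mathcal{R}}\in\mathbb{R}$ be such that $\{a_1,\dots,a_{\mathcal{R}},1\}$ is rationally independent. Suppose $Y=X\beta^*\in\mathbb{R}$, where $X=(X_1,\dots,X_p)\in\mathbb{R}^{1\times p}$ is a jointly continuous random vector and $\beta^*\in\mathbb{R}^p$ satisfies: for each $i\in[p]$, either $\beta^*_i=K_i/Q$ for some $K_i\in\mathbb{Z}$ with $\beta^*_i\in[-\tilde R,\tilde R]$, or $\beta^*_i\in\{a_1,\dots,a_{\mathcal{R}}\}$. Suppose the learner has access to $\hat Q,\hat R\in\mathbb{Z}^+$ with $Q$ dividing $\hat Q$ and $\hat R\ge\tilde R$. Then the integer relation algorithm with input $(\hat QY,\ X_ia_j,\ X_i:\ i\in[p],j\in[\mathcal{R}])$ recovers $\beta^*$ with probability one, in time at most polynomial in $p,\mathcal{R},\log\hat Q$ and $\log\hat R$.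
   Context: A random vector in $\mathbb{R}^p$ is jointly continuous if it has a joint density with respect to Lebesgue measure. A finite set of reals is rationally independent if the only rational linear combination of its elements equal to $0$ is the trivial one. An integer relation for $b\in\mathbb{R}^k$ is a nonzero $m\in\mathbb{Z}^k$ with $\langle b,m\rangle=0$. The integer relation algorithm (IRA, e.g. PSLQ): given $b\in\mathbb{R}^k$ admitting an integer relation, it outputs an integer relation for $b$ after $O(k^3+k^2\log\|m\|)$ arithmetic operations on real numbers, where $m$ is an integer relation of smallest Euclidean norm; arithmetic operations on reals are counted at unit cost. "Recovers $\beta^*$" means that $\beta^*$ can be read off from the integer relation returned. *)

theory Defs
  imports "HOL-Probability.Probability"
begin

definition is_int_rel :: "real list \<Rightarrow> int list \<Rightarrow> bool" where
  "is_int_rel b m \<longleftrightarrow> length m = length b \<and> (\<exists>i<length m. m ! i \<noteq> 0) \<and>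
     (\<Sum>i<length b. b ! i * of_int (m ! i)) = 0"

definition has_int_rel :: "real list \<Rightarrow> bool" where
  "has_int_rel b \<longleftrightarrow> (\<exists>m. is_int_rel b m)"

definition int_vec_norm :: "int list \<Rightarrow> real" where
  "int_vec_norm m = sqrt (\<Sum>i<length m. (of_int (m ! i))\<^sup>2)"

definition min_rel_norm :: "real list \<Rightarrow> real" where
  "min_rel_norm b = Inf (int_vec_norm ` {m. is_int_rel b m})"

text \<open>Specification of an integer relation algorithm (e.g. PSLQ): on every input admitting
  an integer relation it outputs an integer relation, using at most
  C (k^3 + k^2 log ||m||) unit-cost real arithmetic operations, m a smallest-norm relation.\<close>
definition IRA_spec :: "(real list \<Rightarrow> int list) \<Rightarrow> (real list \<Rightarrow> real) \<Rightarrow> real \<Rightarrow> bool" where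
  "IRA_spec ira cost C \<longleftrightarrow> (\<forall>b. has_int_rel b \<longrightarrow>
     is_int_rel b (ira b) \<and>
     cost b \<le> C * (real (length b) ^ 3 + real (length b) ^ 2 * ln (min_rel_norm b)))"

definition rat_indep_with_one :: "nat \<Rightarrow> (nat \<Rightarrow> real) \<Rightarrow> bool" where
  "rat_indep_with_one R a \<longleftrightarrow> (\<forall>(q::nat \<Rightarrow> rat) (q0::rat).
     (\<Sum>j<R. of_rat (q j) * a j) + of_rat q0 = 0 \<longrightarrow> q0 = 0 \<and> (\<forall>j<R. q j = 0))"

definition ira_input :: "int \<Rightarrow> nat \<Rightarrow> nat \<Rightarrow> (nat \<Rightarrow> real) \<Rightarrow> (nat \<Rightarrow> real) \<Rightarrow> real \<Rightarrow> real list" where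
  "ira_input Qh p R a x y =
     (of_int Qh * y) # concat (map (\<lambda>i. map (\<lambda>j. x i * a j) [0..<R]) [0..<p]) @ map x [0..<p]"

definition decode :: "int \<Rightarrow> nat \<Rightarrow> nat \<Rightarrow> (nat \<Rightarrow> real) \<Rightarrow> int list \<Rightarrow> nat \<Rightarrow> real" where
  "decode Qh p R a m i =
     - ((\<Sum>j<R. of_int (m ! (1 + i * R + j)) * a j) + of_int (m ! (1 + p * R + i)))
       / (of_int (m ! 0) * of_int Qh)"

definition lebesgue_Rp :: "nat \<Rightarrow> (nat \<Rightarrow> real) measure" where
  "lebesgue_Rp p = (\<Pi>\<^sub>M i\<in>{..<p}. lborel)"

end

theory Submission
  imports Defs
begin

text \<open>
  For an integer vector m, pairing the input b(x) = (Qh y, x_i a_j, x_i) with m gives a linear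
  form sum_i x_i c_i(m) in x whose coefficients c_i(m) = m_0 Qh \<beta>_i + sum_j m_ij a_j + n_i
  do not depend on x. A nonzero linear form vanishes only on a Lebesgue-null hyperplane and there
  are countably many m, so almost surely every integer relation of b(x) has all c_i(m) = 0.
  Rational independence of {a_1, ..., a_R, 1} then forces m_0 \<noteq> 0, and c_i(m) = 0 is exactly the
  formula from which decode reads off \<beta>_i.

  For the running time, the relation with m_0 = 1 and, per coordinate, either n_i = -K_i Qh / Q
  or m_ij = -Qh for the j with \<beta>_i = a_j, has entries bounded by Qh Rh. Hence the shortest
  relation has norm at most sqrt(k) Qh Rh with k = 1 + pR + p, and the IRA cost
  C (k^3 + k^2 log |m|) is O((p + R + log Qh + log Rh)^6).
\<close>

text \<open>Both the IRA input and the relation exhibited for it consist of a scalar, a p \<times> R block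
  in row-major order, and a p-vector.\<close>
definition ira_layout :: "nat \<Rightarrow> nat \<Rightarrow> 'a \<Rightarrow> (nat \<Rightarrow> nat \<Rightarrow> 'a) \<Rightarrow> (nat \<Rightarrow> 'a) \<Rightarrow> 'a list" where
  "ira_layout p R c g h = c # concat (map (\<lambda>i. map (g i) [0..<R]) [0..<p]) @ map h [0..<p]"

lemma ira_input_eq_ira_layout:
  "ira_input Qh p R a x y = ira_layout p R (of_int Qh * y) (\<lambda>i j. x i * a j) x"
  by (simp add: ira_input_def ira_layout_def)

lemma row_major_index_less:
  fixes i j p R :: nat
  assumes "i < p" "j < R"
  shows "i * R + j < p * R"
proof -
  have "i * R + j < Suc i * R" using assms by simp
  also have "\<dots> \<le> p * R" using assms by (intro mult_right_mono) auto
  finally show ?thesis .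
qed

lemma length_concat_map_rows: "length (concat (map (\<lambda>i. map (g i) [0..<R]) [0..<p])) = p * R"
  by (induction p) auto

lemma nth_concat_map_rows:
  "i < p \<Longrightarrow> j < R \<Longrightarrow> concat (map (\<lambda>i. map (g i) [0..<R]) [0..<p]) ! (i * R + j) = g i j"
proof (induction p)
  case (Suc p)
  show ?case
  proof (cases "i < p")
    case True
    then show ?thesis
      using Suc by (simp add: nth_append length_concat_map_rows row_major_index_less)
  next
    case False
    with Suc.prems have "i = p" by simp
    then show ?thesis
      using Suc.prems by (simp add: nth_append length_concat_map_rows)
  qed
qed simp

lemma length_ira_layout: "length (ira_layout p R c g h) = 1 + p * R + p"
  by (simp add: ira_layout_def length_concat_map_rows)

lemma nth_ira_layout:
  shows "ira_layout p R c g h ! 0 = c"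
    and "i < p \<Longrightarrow> j < R \<Longrightarrow> ira_layout p R c g h ! (1 + i * R + j) = g i j"
    and "i < p \<Longrightarrow> ira_layout p R c g h ! (1 + p * R + i) = h i"
  by (simp_all add: ira_layout_def nth_append length_concat_map_rows nth_concat_map_rows
      row_major_index_less)

lemma set_ira_layout:
  "set (ira_layout p R c g h) = insert c ((\<Union>i<p. g i ` {..<R}) \<union> h ` {..<p})"
  by (auto simp: ira_layout_def)

lemma ira_layout_index_cases:
  fixes t p R :: nat
  assumes "t < 1 + p * R + p"
  obtains "t = 0"
    | i j where "i < p" "j < R" "t = 1 + i * R + j"
    | i where "i < p" "t = 1 + p * R + i"
proof (cases "t = 0")
  case False
  show ?thesis
  proof (cases "t - 1 < p * R")
    case True
    then have "0 < R" by (cases R) auto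
    then show ?thesis
      using that(2)[of "(t - 1) div R" "(t - 1) mod R"] True False
      by (simp add: div_less_iff_less_mult)
  next
    case False
    then show ?thesis using that(3)[of "t - 1 - p * R"] \<open>t \<noteq> 0\<close> assms by simp
  qed
qed (use that in simp)

lemma sum_lessThan_add:
  fixes F :: "nat \<Rightarrow> 'a::comm_monoid_add"
  shows "(\<Sum>t<n + k. F t) = (\<Sum>t<n. F t) + (\<Sum>i<k. F (n + i))"
  by (induction k) (simp_all add: add.assoc)

lemma sum_lessThan_mult:
  fixes F :: "nat \<Rightarrow> 'a::comm_monoid_add"
  shows "(\<Sum>t<p * R. F t) = (\<Sum>i<p. \<Sum>j<R. F (i * R + j))"
proof (induction p)
  case (Suc p)
  have "(\<Sum>t<Suc p * R. F t) = (\<Sum>t<p * R + R. F t)"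
    by (simp add: add.commute)
  also have "\<dots> = (\<Sum>t<p * R. F t) + (\<Sum>j<R. F (p * R + j))"
    by (rule sum_lessThan_add)
  finally show ?case using Suc by simp
qed simp

lemma sum_ira_layout:
  fixes F :: "nat \<Rightarrow> 'a \<Rightarrow> 'b::comm_monoid_add"
  shows "(\<Sum>t<length (ira_layout p R c g h). F t (ira_layout p R c g h ! t)) =
    F 0 c + (\<Sum>i<p. \<Sum>j<R. F (1 + i * R + j) (g i j)) + (\<Sum>i<p. F (1 + p * R + i) (h i))"
proof -
  let ?G = "\<lambda>t. F t (ira_layout p R c g h ! t)"
  have "length (ira_layout p R c g h) = Suc (p * R + p)"
    by (simp add: length_ira_layout)
  then have "(\<Sum>t<length (ira_layout p R c g h). ?G t) = ?G 0 + (\<Sum>t<p * R + p. ?G (Suc t))"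
    by (simp only: sum.lessThan_Suc_shift)
  also have "(\<Sum>t<p * R + p. ?G (Suc t)) = (\<Sum>t<p * R. ?G (Suc t)) + (\<Sum>i<p. ?G (Suc (p * R + i)))"
    by (rule sum_lessThan_add)
  also have "(\<Sum>t<p * R. ?G (Suc t)) = (\<Sum>i<p. \<Sum>j<R. ?G (Suc (i * R + j)))"
    by (rule sum_lessThan_mult)
  also have "(\<Sum>i<p. \<Sum>j<R. ?G (Suc (i * R + j))) = (\<Sum>i<p. \<Sum>j<R. F (1 + i * R + j) (g i j))"
    by (intro sum.cong refl) (simp add: nth_ira_layout(2)[simplified])
  also have "(\<Sum>i<p. ?G (Suc (p * R + i))) = (\<Sum>i<p. F (1 + p * R + i) (h i))"
    by (intro sum.cong refl) (simp add: nth_ira_layout(3)[simplified])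
  finally show ?thesis
    by (simp add: add.assoc nth_ira_layout(1))
qed

text \<open>The coefficient of x_i when the input for y = sum_i x_i \<beta>_i is paired with m.\<close>
definition relation_coeff ::
    "int \<Rightarrow> nat \<Rightarrow> nat \<Rightarrow> (nat \<Rightarrow> real) \<Rightarrow> (nat \<Rightarrow> real) \<Rightarrow> int list \<Rightarrow> nat \<Rightarrow> real" where
  "relation_coeff Qh p R a \<beta> m i =
     of_int (m ! 0) * of_int Qh * \<beta> i + (\<Sum>j<R. of_int (m ! (1 + i * R + j)) * a j)
       + of_int (m ! (1 + p * R + i))"

lemma inner_ira_input:
  "(\<Sum>t<length (ira_input Qh p R a x (\<Sum>i<p. x i * \<beta> i)).
      ira_input Qh p R a x (\<Sum>i<p. x i * \<beta> i) ! t * of_int (m ! t))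
   = (\<Sum>i<p. x i * relation_coeff Qh p R a \<beta> m i)"
proof -
  have "(\<Sum>t<length (ira_input Qh p R a x (\<Sum>i<p. x i * \<beta> i)).
      ira_input Qh p R a x (\<Sum>i<p. x i * \<beta> i) ! t * of_int (m ! t))
    = of_int Qh * (\<Sum>i<p. x i * \<beta> i) * of_int (m ! 0)
      + (\<Sum>i<p. \<Sum>j<R. x i * a j * of_int (m ! (1 + i * R + j)))
      + (\<Sum>i<p. x i * of_int (m ! (1 + p * R + i)))"
    using sum_ira_layout[where F = "\<lambda>t v. v * of_int (m ! t)"] by (simp add: ira_input_eq_ira_layout)
  also have "\<dots> = (\<Sum>i<p. x i * relation_coeff Qh p R a \<beta> m i)"
    by (simp add: relation_coeff_def algebra_simps sum.distrib sum_distrib_left sum_distrib_right)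
  finally show ?thesis .
qed

lemma length_ira_input: "length (ira_input Qh p R a x y) = 1 + p * R + p"
  by (simp add: ira_input_eq_ira_layout length_ira_layout)

lemma is_int_rel_ira_input_iff:
  "is_int_rel (ira_input Qh p R a x (\<Sum>i<p. x i * \<beta> i)) m \<longleftrightarrow>
     length m = 1 + p * R + p \<and> (\<exists>t<length m. m ! t \<noteq> 0) \<and>
     (\<Sum>i<p. x i * relation_coeff Qh p R a \<beta> m i) = 0"
  unfolding is_int_rel_def inner_ira_input by (simp add: length_ira_input)

lemma decode_eq_if_relation_coeff_zero:
  assumes ind: "rat_indep_with_one R a" and Qh: "Qh \<noteq> 0"
    and len: "length m = 1 + p * R + p" and nonzero: "\<exists>t<length m. m ! t \<noteq> 0"
    and coeff: "\<forall>i<p. relation_coeff Qh p R a \<beta> m i = 0" and "i < p"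
  shows "decode Qh p R a m i = \<beta> i"
proof -
  have "m ! 0 \<noteq> 0"
  proof
    assume m0: "m ! 0 = 0"
    have rows_zero: "(\<forall>j<R. m ! (1 + k * R + j) = 0) \<and> m ! (1 + p * R + k) = 0" if "k < p" for k
    proof -
      have "(\<Sum>j<R. of_rat (of_int (m ! (1 + k * R + j))) * a j) + of_rat (of_int (m ! (1 + p * R + k))) = 0"
        using coeff that m0 by (simp add: relation_coeff_def of_rat_of_int_eq)
      then show ?thesis
        using ind unfolding rat_indep_with_one_def by (metis of_int_eq_0_iff)
    qed
    from nonzero obtain t where "t < 1 + p * R + p" "m ! t \<noteq> 0" using len by auto
    then show False
      by (cases rule: ira_layout_index_cases) (use m0 rows_zero in auto)
  qed
  moreover have "of_int (m ! 0) * of_int Qh * \<beta> i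
      = - ((\<Sum>j<R. of_int (m ! (1 + i * R + j)) * a j) + of_int (m ! (1 + p * R + i)))"
    using coeff \<open>i < p\<close> unfolding relation_coeff_def by force
  ultimately show ?thesis
    unfolding decode_def using Qh by (simp add: field_simps)
qed

lemma IRA_spec_decode_eq:
  assumes spec: "IRA_spec ira cost C" and ind: "rat_indep_with_one R a" and "Qh \<noteq> 0"
    and rel: "is_int_rel (ira_input Qh p R a x (\<Sum>i<p. x i * \<beta> i)) m"
    and vanish: "\<forall>m. (\<Sum>i<p. x i * relation_coeff Qh p R a \<beta> m i) = 0
      \<longrightarrow> (\<forall>i<p. relation_coeff Qh p R a \<beta> m i = 0)"
    and "i < p"
  shows "decode Qh p R a (ira (ira_input Qh p R a x (\<Sum>i<p. x i * \<beta> i))) i = \<beta> i"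
proof -
  let ?b = "ira_input Qh p R a x (\<Sum>i<p. x i * \<beta> i)"
  have "has_int_rel ?b"
    using rel unfolding has_int_rel_def ..
  then have "is_int_rel ?b (ira ?b)"
    using spec unfolding IRA_spec_def by blast
  then have "length (ira ?b) = 1 + p * R + p" "\<exists>t<length (ira ?b). ira ?b ! t \<noteq> 0"
    and "(\<Sum>i<p. x i * relation_coeff Qh p R a \<beta> (ira ?b) i) = 0"
    unfolding is_int_rel_ira_input_iff by blast+
  moreover from vanish this(3) have "\<forall>i<p. relation_coeff Qh p R a \<beta> (ira ?b) i = 0"
    by blast
  ultimately show ?thesis
    using decode_eq_if_relation_coeff_zero[OF ind \<open>Qh \<noteq> 0\<close>] \<open>i < p\<close> by blast
qed

lemma coordinate_relation_exists:
  fixes b :: real and a :: "nat \<Rightarrow> real" and Q Qh Rt Rh :: int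
  assumes Q: "0 < Q" and dvd: "Q dvd Qh" and Qh: "0 < Qh" and Rh: "0 < Rh" and "Rt \<le> Rh"
    and b: "(\<exists>K::int. b = of_int K / of_int Q \<and> \<bar>b\<bar> \<le> of_int Rt) \<or> (\<exists>j<R. b = a j)"
  obtains g :: "nat \<Rightarrow> int" and h :: int
  where "of_int Qh * b + (\<Sum>j<R. of_int (g j) * a j) + of_int h = 0"
    and "\<forall>j. \<bar>g j\<bar> \<le> Qh * Rh" and "\<bar>h\<bar> \<le> Qh * Rh"
  using b
proof
  assume "\<exists>K::int. b = of_int K / of_int Q \<and> \<bar>b\<bar> \<le> of_int Rt"
  then obtain K :: int where K: "b = of_int K / of_int Q" and "\<bar>b\<bar> \<le> of_int Rt" by blast
  have "\<bar>of_int K :: real\<bar> = \<bar>b\<bar> * of_int Q"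
    using Q by (simp add: K abs_divide)
  also have "\<dots> \<le> of_int Rt * of_int Q"
    using \<open>\<bar>b\<bar> \<le> of_int Rt\<close> Q by (intro mult_right_mono) auto
  finally have "\<bar>K\<bar> \<le> Rt * Q"
    by (simp flip: of_int_abs of_int_mult)
  then have "\<bar>K * (Qh div Q)\<bar> \<le> Rt * Q * (Qh div Q)"
    using Q Qh by (simp add: abs_mult mult_right_mono pos_imp_zdiv_nonneg_iff)
  also have "\<dots> = Rt * Qh"
    using dvd by (simp add: mult.assoc)
  also have "\<dots> \<le> Qh * Rh"
    using \<open>Rt \<le> Rh\<close> Qh by (simp add: mult.commute)
  finally have bound: "\<bar>- (K * (Qh div Q))\<bar> \<le> Qh * Rh" by simp
  have "of_int Qh * b = of_int (K * (Qh div Q))"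
    using Q dvd by (auto simp: K elim!: dvdE)
  then show thesis
    using Qh Rh bound by (intro that[of "\<lambda>_. 0" "- (K * (Qh div Q))"]) auto
next
  assume "\<exists>j<R. b = a j"
  then obtain j0 where "j0 < R" "b = a j0" by blast
  then have "of_int Qh * b + (\<Sum>j<R. of_int (if j = j0 then - Qh else 0) * a j) + of_int 0 = 0"
    by (simp add: if_distrib[of of_int] if_distrib[of "\<lambda>u. u * _"] cong: if_cong)
  moreover have "\<bar>Qh\<bar> \<le> Qh * Rh"
    using Qh Rh by simp
  ultimately show thesis
    using Qh Rh by (intro that[of "\<lambda>j. if j = j0 then - Qh else 0" 0]) auto
qed

lemma small_relation_exists:
  fixes \<beta> a :: "nat \<Rightarrow> real" and Q Qh Rt Rh :: int
  assumes "0 < Q" "Q dvd Qh" "0 < Qh" "0 < Rh" "Rt \<le> Rh"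
    and \<beta>: "\<forall>i<p. (\<exists>K::int. \<beta> i = of_int K / of_int Q \<and> \<bar>\<beta> i\<bar> \<le> of_int Rt) \<or> (\<exists>j<R. \<beta> i = a j)"
  obtains m where "length m = 1 + p * R + p" and "m ! 0 = 1"
    and "\<forall>i<p. relation_coeff Qh p R a \<beta> m i = 0" and "\<forall>z\<in>set m. \<bar>z\<bar> \<le> Qh * Rh"
proof -
  let ?rel = "\<lambda>i g h. of_int Qh * \<beta> i + (\<Sum>j<R. of_int (g j) * a j) + of_int h = 0
      \<and> (\<forall>j. \<bar>g j\<bar> \<le> Qh * Rh) \<and> \<bar>h\<bar> \<le> Qh * Rh"
  have "\<exists>g h. ?rel i g h" if i: "i < p" for i
  proof -
    obtain g h where "of_int Qh * \<beta> i + (\<Sum>j<R. of_int (g j) * a j) + of_int h = 0"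
      "\<forall>j. \<bar>g j\<bar> \<le> Qh * Rh" "\<bar>h\<bar> \<le> Qh * Rh"
      using coordinate_relation_exists[OF assms(1-5) \<beta>[rule_format, OF i]] .
    then show ?thesis by blast
  qed
  then have "\<forall>i. \<exists>g. i < p \<longrightarrow> (\<exists>h. ?rel i g h)"
    by blast
  from choice[OF this] obtain G where "\<forall>i. i < p \<longrightarrow> (\<exists>h. ?rel i (G i) h)" ..
  then have "\<forall>i. \<exists>h. i < p \<longrightarrow> ?rel i (G i) h"
    by blast
  from choice[OF this] obtain H where "\<forall>i. i < p \<longrightarrow> ?rel i (G i) (H i)" ..
  then have GH: "\<And>i. i < p \<Longrightarrow> ?rel i (G i) (H i)"
    by blast
  show thesis
  proof (rule that[of "ira_layout p R 1 G H"])
    show "\<forall>i<p. relation_coeff Qh p R a \<beta> (ira_layout p R 1 G H) i = 0"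
    proof (intro allI impI)
      fix i assume "i < p"
      have "(\<Sum>j<R. of_int (ira_layout p R 1 G H ! (1 + i * R + j)) * a j) = (\<Sum>j<R. of_int (G i j) * a j)"
        using \<open>i < p\<close> by (intro sum.cong refl) (simp add: nth_ira_layout(2)[simplified])
      then show "relation_coeff Qh p R a \<beta> (ira_layout p R 1 G H) i = 0"
        using GH \<open>i < p\<close>
        unfolding relation_coeff_def nth_ira_layout(1) nth_ira_layout(3)[OF \<open>i < p\<close>] by simp
    qed
    have "1 \<le> Qh * Rh"
      using \<open>0 < Qh\<close> \<open>0 < Rh\<close> by (simp add: int_one_le_iff_zero_less)
    then show "\<forall>z\<in>set (ira_layout p R 1 G H). \<bar>z\<bar> \<le> Qh * Rh"
      using GH by (auto simp: set_ira_layout)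
  qed (simp_all add: length_ira_layout nth_ira_layout)
qed

lemma int_vec_norm_le:
  fixes M :: int
  assumes "0 \<le> M" and "\<forall>z\<in>set m. \<bar>z\<bar> \<le> M"
  shows "int_vec_norm m \<le> sqrt (real (length m)) * of_int M"
proof -
  have "(\<Sum>i<length m. (of_int (m ! i))\<^sup>2) \<le> (\<Sum>i<length m. (of_int M :: real)\<^sup>2)"
  proof (intro sum_mono)
    fix i assume "i \<in> {..<length m}"
    then have "\<bar>of_int (m ! i) :: real\<bar> \<le> of_int M"
      using assms(2) by (simp flip: of_int_abs)
    then have "\<bar>of_int (m ! i) :: real\<bar>\<^sup>2 \<le> (of_int M)\<^sup>2"
      by (intro power_mono) auto
    then show "(of_int (m ! i))\<^sup>2 \<le> (of_int M :: real)\<^sup>2"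
      by simp
  qed
  then have "int_vec_norm m \<le> sqrt (real (length m) * (of_int M)\<^sup>2)"
    unfolding int_vec_norm_def by simp
  also have "\<dots> = sqrt (real (length m)) * of_int M"
    using assms by (simp add: real_sqrt_mult)
  finally show ?thesis .
qed

lemma one_le_int_vec_norm:
  assumes "\<exists>i<length m. m ! i \<noteq> 0"
  shows "1 \<le> int_vec_norm m"
proof -
  from assms obtain i where i: "i < length m" "m ! i \<noteq> 0" by blast
  then have "1 \<le> \<bar>m ! i\<bar>"
    by arith
  then have "1 \<le> \<bar>of_int (m ! i) :: real\<bar>"
    by linarith
  then have "1 \<le> (of_int (m ! i) :: real)\<^sup>2"
    by (metis one_le_power power2_abs)
  also have "\<dots> \<le> (\<Sum>i<length m. (of_int (m ! i))\<^sup>2)"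
    using i by (intro member_le_sum) auto
  finally show ?thesis
    unfolding int_vec_norm_def by simp
qed

lemma min_rel_norm_bounds:
  assumes "is_int_rel b m"
  shows "1 \<le> min_rel_norm b" and "min_rel_norm b \<le> int_vec_norm m"
proof -
  have "\<forall>n \<in> int_vec_norm ` {m. is_int_rel b m}. 1 \<le> n"
    unfolding is_int_rel_def using one_le_int_vec_norm by blast
  then show "1 \<le> min_rel_norm b"
    unfolding min_rel_norm_def using assms by (intro cInf_greatest) auto
  show "min_rel_norm b \<le> int_vec_norm m"
    unfolding min_rel_norm_def using assms
    by (intro cInf_lower) (auto simp: bdd_below_def int_vec_norm_def intro!: exI[of _ 0] sum_nonneg)
qed

lemma IRA_spec_cost_le:
  assumes spec: "IRA_spec ira cost C" and rel: "is_int_rel b m"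
  shows "cost b \<le> max C 0 * (real (length b) ^ 3 + real (length b) ^ 2 * ln (int_vec_norm m))"
proof -
  let ?k = "real (length b)"
  have "has_int_rel b"
    using rel unfolding has_int_rel_def by blast
  then have "cost b \<le> C * (?k ^ 3 + ?k ^ 2 * ln (min_rel_norm b))"
    using spec unfolding IRA_spec_def by blast
  also have "\<dots> \<le> max C 0 * (?k ^ 3 + ?k ^ 2 * ln (min_rel_norm b))"
    using min_rel_norm_bounds[OF rel] by (intro mult_right_mono) auto
  also have "\<dots> \<le> max C 0 * (?k ^ 3 + ?k ^ 2 * ln (int_vec_norm m))"
    using min_rel_norm_bounds[OF rel] by (intro mult_left_mono add_left_mono mult_left_mono ln_mono) auto
  finally show ?thesis .
qed

lemma cubic_cost_le:
  fixes k L S :: real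
  assumes "1 \<le> k" "k \<le> S\<^sup>2" "1 \<le> S" "L \<le> k + S"
  shows "k ^ 3 + k\<^sup>2 * L \<le> 3 * S ^ 6"
proof -
  have "k ^ 3 \<le> (S\<^sup>2) ^ 3" "k\<^sup>2 \<le> (S\<^sup>2)\<^sup>2"
    using assms by (intro power_mono; simp)+
  then have k3: "k ^ 3 \<le> S ^ 6" and k2: "k\<^sup>2 \<le> S ^ 4"
    by (simp_all flip: power_mult)
  have "S ^ 4 * S \<le> S ^ 6"
    using \<open>1 \<le> S\<close> by (simp flip: power_Suc2) (intro power_increasing, auto)
  then have "k\<^sup>2 * S \<le> S ^ 6"
    using k2 \<open>1 \<le> S\<close> by (meson dual_order.trans mult_right_mono zero_le_one order_trans)
  have "k\<^sup>2 * L \<le> k\<^sup>2 * (k + S)"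
    using assms by (intro mult_left_mono) auto
  also have "\<dots> = k ^ 3 + k\<^sup>2 * S"
    by (simp add: algebra_simps power2_eq_square power3_eq_cube)
  finally show ?thesis
    using k3 \<open>k\<^sup>2 * S \<le> S ^ 6\<close> by simp
qed

lemma ira_cost_poly_bound:
  assumes spec: "IRA_spec ira cost C" and rel: "is_int_rel b m"
    and len: "length b = 1 + p * R + p" and small: "\<forall>z\<in>set m. \<bar>z\<bar> \<le> Qh * Rh"
    and Qh: "0 < Qh" and Rh: "0 < Rh"
  shows "cost b \<le> 3 * max C 0 * (real p + real R + ln (of_int Qh) + ln (of_int Rh) + 1) ^ 6"
proof -
  define k where "k = real (length b)"
  define S where "S = real p + real R + ln (of_int Qh) + ln (of_int Rh) + 1"
  have ln_nonneg: "0 \<le> ln (of_int Qh :: real)" "0 \<le> ln (of_int Rh :: real)"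
    using Qh Rh by simp_all
  have k: "1 \<le> k" "k \<le> S\<^sup>2"
  proof -
    have "k \<le> (real p + real R + 1)\<^sup>2"
      unfolding k_def len by (simp add: power2_eq_square algebra_simps)
    also have "\<dots> \<le> S\<^sup>2"
      unfolding S_def using ln_nonneg by (intro power_mono) auto
    finally show "k \<le> S\<^sup>2" .
  qed (simp add: k_def len)
  have "length m = length b"
    using rel unfolding is_int_rel_def by simp
  then have norm_le: "int_vec_norm m \<le> sqrt k * (of_int Qh * of_int Rh)"
    using int_vec_norm_le[OF _ small] Qh Rh unfolding k_def by simp
  have "0 \<le> ln k" "ln k < k"
    using k by simp_all
  then have "ln k / 2 \<le> k"
    by linarith
  have "ln (int_vec_norm m) \<le> ln (sqrt k * (of_int Qh * of_int Rh))"
    using norm_le min_rel_norm_bounds[OF rel] by (intro ln_mono) auto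
  also have "\<dots> = ln k / 2 + ln (of_int Qh) + ln (of_int Rh)"
    using k Qh Rh by (simp add: ln_mult ln_sqrt)
  also have "\<dots> \<le> k + S"
    using \<open>ln k / 2 \<le> k\<close> unfolding S_def by (simp add: add_increasing2)
  finally have "ln (int_vec_norm m) \<le> k + S" .
  then have "k ^ 3 + k\<^sup>2 * ln (int_vec_norm m) \<le> 3 * S ^ 6"
    using k by (intro cubic_cost_le) (auto simp: S_def ln_nonneg)
  then have "max C 0 * (k ^ 3 + k\<^sup>2 * ln (int_vec_norm m)) \<le> max C 0 * (3 * S ^ 6)"
    by (intro mult_left_mono) auto
  then show ?thesis
    using IRA_spec_cost_le[OF spec rel] unfolding k_def S_def by simp
qed

lemma AE_lebesgue_Rp_linear_form_nonzero:
  fixes c :: "nat \<Rightarrow> real"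
  assumes "i0 < p" and "c i0 \<noteq> 0"
  shows "AE x in lebesgue_Rp p. (\<Sum>i<p. x i * c i) \<noteq> 0"
proof -
  interpret product_sigma_finite "\<lambda>_::nat. lborel :: real measure"
    by (simp add: product_sigma_finite_def lborel.sigma_finite_measure_axioms)
  define J where "J = {..<p} - {i0}"
  have p_eq: "{..<p} = insert i0 J" and J: "finite J" "i0 \<notin> J"
    using assms(1) by (auto simp: J_def)
  have M_eq: "lebesgue_Rp p = Pi\<^sub>M (insert i0 J) (\<lambda>_. lborel)"
    unfolding lebesgue_Rp_def p_eq ..
  define H where "H = {x \<in> space (lebesgue_Rp p). (\<Sum>i<p. x i * c i) = 0}"
  have "(\<lambda>x. \<Sum>i<p. x i * c i) \<in> borel_measurable (lebesgue_Rp p)"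
    unfolding lebesgue_Rp_def by measurable
  then have H_sets: "H \<in> sets (lebesgue_Rp p)"
    unfolding H_def by measurable
  \<comment> \<open>Every line parallel to the i0-th axis meets the hyperplane H in at most one point.\<close>
  have fibre_null: "(\<integral>\<^sup>+ y. indicator H (x(i0 := y)) \<partial>lborel) = 0" for x
  proof -
    define t where "t = - (\<Sum>i\<in>J. x i * c i) / c i0"
    have "indicator H (x(i0 := y)) = (0::ennreal)" if "y \<noteq> t" for y
    proof -
      have "(\<Sum>i<p. (x(i0 := y)) i * c i) = y * c i0 + (\<Sum>i\<in>J. (x(i0 := y)) i * c i)"
        unfolding p_eq using J by simp
      also have "(\<Sum>i\<in>J. (x(i0 := y)) i * c i) = (\<Sum>i\<in>J. x i * c i)"
        using J by (intro sum.cong) auto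
      finally have "(\<Sum>i<p. (x(i0 := y)) i * c i) = y * c i0 + (\<Sum>i\<in>J. x i * c i)" .
      moreover have "y * c i0 + (\<Sum>i\<in>J. x i * c i) \<noteq> 0"
      proof
        assume "y * c i0 + (\<Sum>i\<in>J. x i * c i) = 0"
        then have "y * c i0 = - (\<Sum>i\<in>J. x i * c i)"
          by linarith
        then have "y = t"
          unfolding t_def using assms(2) by (metis nonzero_mult_div_cancel_right)
        with that show False by simp
      qed
      ultimately show ?thesis
        unfolding H_def by simp
    qed
    then have "AE y in lborel. indicator H (x(i0 := y)) = (0::ennreal)"
      using AE_lborel_singleton[of t] by (auto elim: eventually_mono)
    then show ?thesis
      by (simp add: nn_integral_cong_AE)
  qed
  have "emeasure (lebesgue_Rp p) H = (\<integral>\<^sup>+ x. indicator H x \<partial>lebesgue_Rp p)"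
    using H_sets by simp
  also have "\<dots> = (\<integral>\<^sup>+ x. (\<integral>\<^sup>+ y. indicator H (x(i0 := y)) \<partial>lborel) \<partial>Pi\<^sub>M J (\<lambda>_. lborel))"
    unfolding M_eq using J H_sets[unfolded M_eq] by (intro product_nn_integral_insert) auto
  also have "\<dots> = 0"
    by (simp add: fibre_null)
  finally have "H \<in> null_sets (lebesgue_Rp p)"
    using H_sets by auto
  then show ?thesis
    by (rule AE_I') (auto simp: H_def)
qed

lemma AE_lebesgue_Rp_linear_forms_vanish:
  fixes c :: "'a::countable \<Rightarrow> nat \<Rightarrow> real"
  shows "AE x in lebesgue_Rp p. \<forall>m. (\<Sum>i<p. x i * c m i) = 0 \<longrightarrow> (\<forall>i<p. c m i = 0)"
  unfolding AE_all_countable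
proof
  fix m
  show "AE x in lebesgue_Rp p. (\<Sum>i<p. x i * c m i) = 0 \<longrightarrow> (\<forall>i<p. c m i = 0)"
  proof (cases "\<forall>i<p. c m i = 0")
    case False
    then obtain i0 where "i0 < p" "c m i0 \<noteq> 0" by blast
    from AE_lebesgue_Rp_linear_form_nonzero[of i0 p "c m", OF this] show ?thesis
      by (rule eventually_mono) simp
  qed simp
qed

theorem theorem8:
  fixes ira :: "real list \<Rightarrow> int list" and cost :: "real list \<Rightarrow> real" and C :: real
  assumes "IRA_spec ira cost C"
  shows "\<exists>(c::real) (d::nat). \<forall>(p::nat) (R::nat) (Q::int) (Rt::int) (a::nat \<Rightarrow> real)
     (\<beta>::nat \<Rightarrow> real) (Qh::int) (Rh::int) (f::(nat \<Rightarrow> real) \<Rightarrow> ennreal).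
     0 < p \<longrightarrow> 0 < R \<longrightarrow> 0 < Q \<longrightarrow> 0 < Rt \<longrightarrow>
     rat_indep_with_one R a \<longrightarrow>
     (\<forall>i<p. (\<exists>K::int. \<beta> i = of_int K / of_int Q \<and> \<bar>\<beta> i\<bar> \<le> of_int Rt) \<or> (\<exists>j<R. \<beta> i = a j)) \<longrightarrow>
     0 < Qh \<longrightarrow> 0 < Rh \<longrightarrow> Q dvd Qh \<longrightarrow> Rt \<le> Rh \<longrightarrow>
     f \<in> borel_measurable (lebesgue_Rp p) \<longrightarrow> prob_space (density (lebesgue_Rp p) f) \<longrightarrow>
     (AE x in density (lebesgue_Rp p) f.
        (let b = ira_input Qh p R a x (\<Sum>i<p. x i * \<beta> i) in
          (\<forall>i<p. decode Qh p R a (ira b) i = \<beta> i) \<and>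
          cost b \<le> c * (real p + real R + ln (of_int Qh) + ln (of_int Rh) + 1) ^ d))"
proof (intro exI[of _ "3 * max C 0"] exI[of _ "6::nat"] allI impI)
  fix p R :: nat and Q Rt Qh Rh :: int and a \<beta> :: "nat \<Rightarrow> real" and f :: "(nat \<Rightarrow> real) \<Rightarrow> ennreal"
  assume "0 < p" "0 < R" "0 < Q" "0 < Rt" and ind: "rat_indep_with_one R a"
    and \<beta>: "\<forall>i<p. (\<exists>K::int. \<beta> i = of_int K / of_int Q \<and> \<bar>\<beta> i\<bar> \<le> of_int Rt) \<or> (\<exists>j<R. \<beta> i = a j)"
    and "0 < Qh" "0 < Rh" "Q dvd Qh" "Rt \<le> Rh"
    and f: "f \<in> borel_measurable (lebesgue_Rp p)" and "prob_space (density (lebesgue_Rp p) f)"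
  obtain m where m: "length m = 1 + p * R + p" "m ! 0 = 1"
    "\<forall>i<p. relation_coeff Qh p R a \<beta> m i = 0" "\<forall>z\<in>set m. \<bar>z\<bar> \<le> Qh * Rh"
    using small_relation_exists[OF \<open>0 < Q\<close> \<open>Q dvd Qh\<close> \<open>0 < Qh\<close> \<open>0 < Rh\<close> \<open>Rt \<le> Rh\<close> \<beta>] .
  have rel: "is_int_rel (ira_input Qh p R a x (\<Sum>i<p. x i * \<beta> i)) m" for x
    using m unfolding is_int_rel_ira_input_iff by auto
  have "AE x in lebesgue_Rp p. \<forall>m'. (\<Sum>i<p. x i * relation_coeff Qh p R a \<beta> m' i) = 0
      \<longrightarrow> (\<forall>i<p. relation_coeff Qh p R a \<beta> m' i = 0)"
    by (rule AE_lebesgue_Rp_linear_forms_vanish)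
  then have "AE x in density (lebesgue_Rp p) f. \<forall>m'. (\<Sum>i<p. x i * relation_coeff Qh p R a \<beta> m' i) = 0
      \<longrightarrow> (\<forall>i<p. relation_coeff Qh p R a \<beta> m' i = 0)"
    unfolding AE_density[OF f] by (rule eventually_mono) simp
  then show "AE x in density (lebesgue_Rp p) f. let b = ira_input Qh p R a x (\<Sum>i<p. x i * \<beta> i) in
      (\<forall>i<p. decode Qh p R a (ira b) i = \<beta> i) \<and>
      cost b \<le> 3 * max C 0 * (real p + real R + ln (of_int Qh) + ln (of_int Rh) + 1) ^ 6"
    using IRA_spec_decode_eq[OF assms ind _ rel] ira_cost_poly_bound[OF assms rel length_ira_input m(4)]
      \<open>0 < Qh\<close> \<open>0 < Rh\<close>
    by (auto elim!: eventually_mono)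
qed

end
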